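(* Let $m,s$ be positive integers and $t,r$ integers with $r^s\equiv 1\pmod m$ and $m\mid t(r-1)$, and let $G=\langle a,b\mid a^m=1,\ b^s=a^t,\ b^{-1}ab=a^r\rangle$. If $(m,r-1)\mid t$, then $G$ is the active sum of the family consisting of $\langle a\rangle$, $\langle b\rangle$ and all their conjugates in $G$.
   Context: $(x,y)$ denotes the greatest common divisor (with $(m,0)=m$). Such a group is finite metacyclic with $a$ of order $m$. For a group $G$ and a family $\mathcal{F}$ of distinct subgroups that generates $G$ and is closed under conjugation, the active sum $S$ of $\mathcal{F}$ is the free product of the members of $\mathcal{F}$ divided by the normal subgroup generated by all elements $h^{-1}\cdot g\cdot h\cdot (g^h)^{-1}$ with $h\in F_1$, $g\in F_2$, $F_1,F_2\in\mathcal{F}$, where $g^h=h^{-1}gh$ is regarded as an element of the factor $h^{-1}F_2h\in\mathcal{F}$. The inclusions induce a canonical surjection $\varphi:S\to G$, and "$G$ is the active sum of $\mathcal{F}$" means $\varphi$ is an isomorphism. *)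

theory Defs
  imports "HOL-Algebra.Algebra"
begin

inductive word_cong :: "('l list \<times> 'l list) set \<Rightarrow> 'l list \<Rightarrow> 'l list \<Rightarrow> bool"
  for Rl where
  base: "(u, v) \<in> Rl \<Longrightarrow> word_cong Rl u v"
| refl: "word_cong Rl u u"
| sym: "word_cong Rl u v \<Longrightarrow> word_cong Rl v u"
| trans: "word_cong Rl u v \<Longrightarrow> word_cong Rl v w \<Longrightarrow> word_cong Rl u w"
| ctxt: "word_cong Rl u v \<Longrightarrow> word_cong Rl (x @ u @ y) (x @ v @ y)"

definition word_class :: "'l set \<Rightarrow> ('l list \<times> 'l list) set \<Rightarrow> 'l list \<Rightarrow> 'l list set" where
  "word_class Xl Rl w = {v. set v \<subseteq> Xl \<and> word_cong Rl v w}"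

definition word_monoid :: "'l set \<Rightarrow> ('l list \<times> 'l list) set \<Rightarrow> 'l list set monoid" where
  "word_monoid Xl Rl =
     \<lparr> carrier = word_class Xl Rl ` {w. set w \<subseteq> Xl},
       monoid.mult = (\<lambda>A B. {w. set w \<subseteq> Xl \<and> (\<exists>u\<in>A. \<exists>v\<in>B. word_cong Rl w (u @ v))}),
       one = word_class Xl Rl [] \<rparr>"

text \<open>Letters are (generator, inverted?) pairs; the free-group relations x x^-1 = 1 = x^-1 x
  are added to the given defining relations (pairs of words to be identified).\<close>
definition free_rels :: "'g set \<Rightarrow> (('g \<times> bool) list \<times> ('g \<times> bool) list) set" where
  "free_rels Xl = {([(x, e), (x, \<not> e)], []) | x e. x \<in> Xl}"

definition presented_group ::
  "'g set \<Rightarrow> (('g \<times> bool) list \<times> ('g \<times> bool) list) set \<Rightarrow> ('g \<times> bool) list set monoid" where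
  "presented_group Xl Rel = word_monoid (Xl \<times> UNIV) (free_rels Xl \<union> Rel)"

definition wpow :: "'g \<Rightarrow> int \<Rightarrow> ('g \<times> bool) list" where
  "wpow x k = (if 0 \<le> k then replicate (nat k) (x, False) else replicate (nat (- k)) (x, True))"

datatype gen = GA | GB

definition metacyclic_rels :: "nat \<Rightarrow> nat \<Rightarrow> int \<Rightarrow> int \<Rightarrow> ((gen \<times> bool) list \<times> (gen \<times> bool) list) set" where
  "metacyclic_rels m s t r =
     {(wpow GA (int m), []),
      (wpow GB (int s), wpow GA t),
      ([(GB, True), (GA, False), (GB, False)], wpow GA r)}"

definition metacyclic :: "nat \<Rightarrow> nat \<Rightarrow> int \<Rightarrow> int \<Rightarrow> (gen \<times> bool) list set monoid" where
  "metacyclic m s t r = presented_group UNIV (metacyclic_rels m s t r)"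

definition mc_a :: "nat \<Rightarrow> nat \<Rightarrow> int \<Rightarrow> int \<Rightarrow> (gen \<times> bool) list set" where
  "mc_a m s t r = word_class (UNIV \<times> UNIV) (free_rels UNIV \<union> metacyclic_rels m s t r) [(GA, False)]"

definition mc_b :: "nat \<Rightarrow> nat \<Rightarrow> int \<Rightarrow> int \<Rightarrow> (gen \<times> bool) list set" where
  "mc_b m s t r = word_class (UNIV \<times> UNIV) (free_rels UNIV \<union> metacyclic_rels m s t r) [(GB, False)]"

definition conj_set :: "('a, 'b) monoid_scheme \<Rightarrow> 'a \<Rightarrow> 'a set \<Rightarrow> 'a set" where
  "conj_set G h H = (\<lambda>x. inv\<^bsub>G\<^esub> h \<otimes>\<^bsub>G\<^esub> x \<otimes>\<^bsub>G\<^esub> h) ` H"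

text \<open>Letters of the free product: pairs (factor, element of that factor).\<close>
definition as_letters :: "('a, 'b) monoid_scheme \<Rightarrow> 'a set set \<Rightarrow> ('a set \<times> 'a) set" where
  "as_letters G F = {(H, g). H \<in> F \<and> g \<in> H}"

text \<open>Relations: the monoid presentation of the free product of the members of F
  (multiplication inside each factor, identity of each factor = empty word), together
  with the active relators h^-1 g h (g^h)^-1 = 1 (h in F1, g in F2, g^h in h^-1 F2 h).\<close>
definition as_rels :: "('a, 'b) monoid_scheme \<Rightarrow> 'a set set \<Rightarrow> (('a set \<times> 'a) list \<times> ('a set \<times> 'a) list) set" where
  "as_rels G F =
     {([(H, g), (H, g')], [(H, g \<otimes>\<^bsub>G\<^esub> g')]) | H g g'. H \<in> F \<and> g \<in> H \<and> g' \<in> H}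
   \<union> {([(H, \<one>\<^bsub>G\<^esub>)], []) | H. H \<in> F}
   \<union> {([(H1, inv\<^bsub>G\<^esub> h), (H2, g), (H1, h),
        (conj_set G h H2, inv\<^bsub>G\<^esub> (inv\<^bsub>G\<^esub> h \<otimes>\<^bsub>G\<^esub> g \<otimes>\<^bsub>G\<^esub> h))], [])
       | H1 H2 h g. H1 \<in> F \<and> H2 \<in> F \<and> h \<in> H1 \<and> g \<in> H2}"

definition active_sum_group :: "('a, 'b) monoid_scheme \<Rightarrow> 'a set set \<Rightarrow> ('a set \<times> 'a) list set monoid" where
  "active_sum_group G F = word_monoid (as_letters G F) (as_rels G F)"

definition eval_word :: "('a, 'b) monoid_scheme \<Rightarrow> ('a set \<times> 'a) list \<Rightarrow> 'a" where
  "eval_word G w = foldr (\<lambda>(H, g) acc. g \<otimes>\<^bsub>G\<^esub> acc) w \<one>\<^bsub>G\<^esub>"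

definition active_sum_map :: "('a, 'b) monoid_scheme \<Rightarrow> 'a set set \<Rightarrow> ('a set \<times> 'a) list set \<Rightarrow> 'a" where
  "active_sum_map G F A = eval_word G (SOME w. w \<in> A)"

definition is_active_sum :: "('a, 'b) monoid_scheme \<Rightarrow> 'a set set \<Rightarrow> bool" where
  "is_active_sum G F \<longleftrightarrow>
     (\<forall>H\<in>F. subgroup H G) \<and>
     generate G (\<Union>F) = carrier G \<and>
     (\<forall>H\<in>F. \<forall>h\<in>carrier G. conj_set G h H \<in> F) \<and>
     active_sum_map G F \<in> iso (active_sum_group G F) G"

end

theory Submission
  imports Defs
begin

text \<open>Since the family F is closed under conjugation, the canonical map from the active sum S
  to G is an isomorphism as soon as some homomorphism \<psi> : G \<rightarrow> S agrees with the inclusions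
  of \<langle>a\<rangle> and \<langle>b\<rangle>: the active relations propagate this agreement to all conjugates, so
  \<psi> inverts the canonical map. By the universal property of the presentation, \<psi> exists once
  the images of a and b in S satisfy the defining relations. Of these, a^m = 1 holds because the
  inclusion of \<langle>a\<rangle> is a homomorphism, and b^-1 a b = a^r is an active relation because b
  normalises \<langle>a\<rangle>. For b^s = a^t write t = \<alpha>m + \<beta>(r - 1), which
  is possible since (m, r - 1) divides t; then a^t is the commutator of c = a^\<beta> and b, and the
  active relations for the pairs (\<langle>a\<rangle>, \<langle>b\<rangle>) and (\<langle>b\<rangle>, \<langle>a\<rangle>) turn this identity in G into
  the identity b^s = a^t in S. The hypotheses m > 0, r^s \<equiv> 1 and m | t(r - 1) only guarantee
  that G has order ms.\<close>

section \<open>Monoids presented by words\<close>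

definition word_eval :: "('m, 'z) monoid_scheme \<Rightarrow> ('l \<Rightarrow> 'm) \<Rightarrow> 'l list \<Rightarrow> 'm" where
  "word_eval M f w = foldr (\<lambda>l acc. f l \<otimes>\<^bsub>M\<^esub> acc) w \<one>\<^bsub>M\<^esub>"

lemma word_eval_Nil [simp]: "word_eval M f [] = \<one>\<^bsub>M\<^esub>"
  by (simp add: word_eval_def)

lemma word_eval_Cons [simp]: "word_eval M f (l # w) = f l \<otimes>\<^bsub>M\<^esub> word_eval M f w"
  by (simp add: word_eval_def)

lemma word_eval_cong:
  "(\<And>l. l \<in> set w \<Longrightarrow> f l = g l) \<Longrightarrow> word_eval M f w = word_eval M g w"
  by (induction w) auto

lemma (in monoid) word_eval_closed:
  "(\<And>l. l \<in> set w \<Longrightarrow> f l \<in> carrier G) \<Longrightarrow> word_eval G f w \<in> carrier G"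
  by (induction w) auto

lemma (in monoid) word_eval_append:
  assumes "\<And>l. l \<in> set u \<Longrightarrow> f l \<in> carrier G" "\<And>l. l \<in> set v \<Longrightarrow> f l \<in> carrier G"
  shows "word_eval G f (u @ v) = word_eval G f u \<otimes> word_eval G f v"
  using assms(1) by (induction u) (auto simp: m_assoc word_eval_closed assms(2))

lemma (in monoid) word_eval_replicate:
  "f l \<in> carrier G \<Longrightarrow> word_eval G f (replicate n l) = f l [^] n"
  by (induction n) (simp_all add: nat_pow_comm[of "f l" 1, simplified])

lemma hom_word_eval:
  assumes "h \<in> hom M N" "group M" "group N" "\<And>l. l \<in> set w \<Longrightarrow> f l \<in> carrier M"
  shows "h (word_eval M f w) = word_eval N (\<lambda>l. h (f l)) w"
proof -
  interpret group_hom M N h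
    using assms(1-3) by (simp add: group_hom_def group_hom_axioms_def)
  show ?thesis
    using assms(4) by (induction w) (simp_all add: G.word_eval_closed)
qed

definition rels_over :: "'l set \<Rightarrow> ('l list \<times> 'l list) set \<Rightarrow> bool" where
  "rels_over Xl Rl \<longleftrightarrow> (\<forall>(u, v) \<in> Rl. set u \<subseteq> Xl \<and> set v \<subseteq> Xl)"

lemma word_cong_set_iff:
  "word_cong Rl u v \<Longrightarrow> rels_over Xl Rl \<Longrightarrow> set u \<subseteq> Xl \<longleftrightarrow> set v \<subseteq> Xl"
  by (induction rule: word_cong.induct) (auto simp: rels_over_def)

lemma word_cong_append:
  assumes "word_cong Rl u u'" "word_cong Rl v v'"
  shows "word_cong Rl (u @ v) (u' @ v')"
  using word_cong.ctxt[OF assms(1), of "[]" v] word_cong.ctxt[OF assms(2), of u' "[]"]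
  by (auto intro: word_cong.trans)

lemma word_class_self: "set w \<subseteq> Xl \<Longrightarrow> w \<in> word_class Xl Rl w"
  by (simp add: word_class_def word_cong.refl)

lemma word_class_eqI: "word_cong Rl u v \<Longrightarrow> word_class Xl Rl u = word_class Xl Rl v"
  by (auto simp: word_class_def intro: word_cong.trans word_cong.sym)

lemma word_class_eq_iff:
  assumes "set u \<subseteq> Xl"
  shows "word_class Xl Rl u = word_class Xl Rl v \<longleftrightarrow> word_cong Rl u v"
proof
  assume "word_class Xl Rl u = word_class Xl Rl v"
  then have "u \<in> word_class Xl Rl v" using word_class_self[OF assms, of Rl] by simp
  then show "word_cong Rl u v" by (simp add: word_class_def)
qed (rule word_class_eqI)

lemma word_monoid_carrier: "carrier (word_monoid Xl Rl) = word_class Xl Rl ` {w. set w \<subseteq> Xl}"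
  by (simp add: word_monoid_def)

lemma word_monoid_one: "\<one>\<^bsub>word_monoid Xl Rl\<^esub> = word_class Xl Rl []"
  by (simp add: word_monoid_def)

lemma word_monoid_mult:
  assumes "set u \<subseteq> Xl" "set v \<subseteq> Xl"
  shows "word_class Xl Rl u \<otimes>\<^bsub>word_monoid Xl Rl\<^esub> word_class Xl Rl v = word_class Xl Rl (u @ v)"
proof -
  have "(\<exists>u'\<in>word_class Xl Rl u. \<exists>v'\<in>word_class Xl Rl v. word_cong Rl w (u' @ v'))
        \<longleftrightarrow> word_cong Rl w (u @ v)" for w
    using assms by (auto simp: word_class_def intro: word_cong.trans word_cong_append word_cong.refl)
  then show ?thesis by (simp add: word_monoid_def word_class_def)
qed

lemma monoid_word_monoid: "monoid (word_monoid Xl Rl)"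
  by (rule monoidI) (auto simp: word_monoid_carrier word_monoid_mult word_monoid_one)

lemma group_word_monoid:
  assumes "\<And>x. x \<in> Xl \<Longrightarrow> \<exists>y\<in>Xl. word_cong Rl [y, x] []"
  shows "group (word_monoid Xl Rl)"
proof (rule monoid.group_l_invI[OF monoid_word_monoid])
  fix x assume "x \<in> carrier (word_monoid Xl Rl)"
  then obtain w where w: "set w \<subseteq> Xl" "x = word_class Xl Rl w"
    by (auto simp: word_monoid_carrier)
  have "\<exists>w'. set w' \<subseteq> Xl \<and> word_cong Rl (w' @ w) []"
    using w(1)
  proof (induction w)
    case Nil
    show ?case by (intro exI[of _ "[]"]) (simp add: word_cong.refl)
  next
    case (Cons x w)
    then obtain w' where w': "set w' \<subseteq> Xl" "word_cong Rl (w' @ w) []" by auto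
    obtain y where y: "y \<in> Xl" "word_cong Rl [y, x] []" using assms Cons.prems by auto
    have "word_cong Rl (w' @ [y, x] @ w) (w' @ [] @ w)" by (rule word_cong.ctxt[OF y(2)])
    then have "word_cong Rl ((w' @ [y]) @ x # w) []" using w'(2) by (auto intro: word_cong.trans)
    then show ?case using w' y by (intro exI[of _ "w' @ [y]"]) auto
  qed
  then show "\<exists>Y\<in>carrier (word_monoid Xl Rl). Y \<otimes>\<^bsub>word_monoid Xl Rl\<^esub> x = \<one>\<^bsub>word_monoid Xl Rl\<^esub>"
    using w by (force simp: word_monoid_carrier word_monoid_mult word_monoid_one word_class_eq_iff)
qed

lemma word_class_eq_word_eval:
  "set w \<subseteq> Xl \<Longrightarrow>
   word_class Xl Rl w = word_eval (word_monoid Xl Rl) (\<lambda>l. word_class Xl Rl [l]) w"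
proof (induction w)
  case (Cons l w)
  then show ?case using word_monoid_mult[of "[l]" Xl w Rl] by simp
qed (simp add: word_monoid_one)

lemma (in monoid) word_eval_respects_word_cong:
  assumes "word_cong Rl u v" "rels_over Xl Rl" "\<And>l. l \<in> Xl \<Longrightarrow> f l \<in> carrier G"
    and "\<And>u v. (u, v) \<in> Rl \<Longrightarrow> word_eval G f u = word_eval G f v"
    and "set u \<subseteq> Xl"
  shows "word_eval G f u = word_eval G f v"
  using assms(1,5)
proof (induction rule: word_cong.induct)
  case (ctxt u v x y)
  have closed: "f l \<in> carrier G" if "l \<in> set x \<union> set u \<union> set v \<union> set y" for l
    using word_cong_set_iff[OF ctxt.hyps(1) assms(2)] ctxt.prems assms(3) that by auto
  have eval_in_context:
    "word_eval G f (x @ w @ y) = word_eval G f x \<otimes> (word_eval G f w \<otimes> word_eval G f y)"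
    if "w = u \<or> w = v" for w
    using that closed word_eval_append[of x f "w @ y"] word_eval_append[of w f y] by auto
  show ?case
    using ctxt.IH ctxt.prems eval_in_context by simp
qed (use assms(4) word_cong_set_iff[OF _ assms(2)] in auto)

text \<open>A class is evaluated at an arbitrary representative; this is well defined as soon as the
  letter map respects the relations.\<close>
definition word_monoid_lift :: "('m, 'z) monoid_scheme \<Rightarrow> ('l \<Rightarrow> 'm) \<Rightarrow> 'l list set \<Rightarrow> 'm" where
  "word_monoid_lift M f A = word_eval M f (SOME w. w \<in> A)"

context
  fixes M :: "('m, 'z) monoid_scheme" and f :: "'l \<Rightarrow> 'm" and Xl Rl
  assumes M: "monoid M" and rels: "rels_over Xl Rl"
    and f_closed: "\<And>l. l \<in> Xl \<Longrightarrow> f l \<in> carrier M"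
    and f_rels: "\<And>u v. (u, v) \<in> Rl \<Longrightarrow> word_eval M f u = word_eval M f v"
begin

lemma word_monoid_lift_class:
  assumes "set w \<subseteq> Xl"
  shows "word_monoid_lift M f (word_class Xl Rl w) = word_eval M f w"
proof -
  have "(SOME v. v \<in> word_class Xl Rl w) \<in> word_class Xl Rl w"
    using word_class_self[OF assms] by (rule someI)
  then show ?thesis
    unfolding word_monoid_lift_def word_class_def
    using monoid.word_eval_respects_word_cong[OF M _ rels f_closed f_rels] by blast
qed

lemma word_monoid_lift_hom: "word_monoid_lift M f \<in> hom (word_monoid Xl Rl) M"
  by (rule homI)
    (auto simp: word_monoid_carrier word_monoid_mult word_monoid_lift_class
      monoid.word_eval_closed[OF M] monoid.word_eval_append[OF M] f_closed subset_iff)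

end

section \<open>Presented groups\<close>

definition letter_val :: "('m, 'z) monoid_scheme \<Rightarrow> ('g \<Rightarrow> 'm) \<Rightarrow> 'g \<times> bool \<Rightarrow> 'm" where
  "letter_val M f = (\<lambda>(x, e). if e then inv\<^bsub>M\<^esub> (f x) else f x)"

lemma (in group) word_eval_letter_val_wpow:
  assumes "f x \<in> carrier G"
  shows "word_eval G (letter_val G f) (wpow x k) = f x [^] k"
proof (cases "0 \<le> k")
  case True
  then have "word_eval G (letter_val G f) (wpow x k) = f x [^] nat k"
    using assms by (simp add: wpow_def letter_val_def word_eval_replicate)
  then show ?thesis using True int_pow_int[of G "f x" "nat k"] by simp
next
  case False
  then have "word_eval G (letter_val G f) (wpow x k) = inv (f x) [^] nat (- k)"
    using assms by (simp add: wpow_def letter_val_def word_eval_replicate)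
  then show ?thesis
    using False assms int_pow_neg_int[of "f x" "nat (- k)"] nat_pow_inv[of "f x" "nat (- k)"] by simp
qed

locale group_presentation =
  fixes Xl :: "'g set" and Rel :: "(('g \<times> bool) list \<times> ('g \<times> bool) list) set"
begin

abbreviation "P \<equiv> presented_group Xl Rel"
abbreviation "gcl \<equiv> word_class (Xl \<times> UNIV) (free_rels Xl \<union> Rel)"

lemma presented_group_eq: "P = word_monoid (Xl \<times> UNIV) (free_rels Xl \<union> Rel)"
  by (simp add: presented_group_def)

lemma free_rel_cong: "x \<in> Xl \<Longrightarrow> word_cong (free_rels Xl \<union> Rel) [(x, e), (x, \<not> e)] []"
  by (rule word_cong.base) (auto simp: free_rels_def)

lemma group_presented_group: "group P"
  unfolding presented_group_eq
proof (rule group_word_monoid)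
  fix l assume "l \<in> Xl \<times> (UNIV :: bool set)"
  then obtain x e where "l = (x, e)" "x \<in> Xl" by auto
  then show "\<exists>y\<in>Xl \<times> UNIV. word_cong (free_rels Xl \<union> Rel) [y, l] []"
    using free_rel_cong[of x "\<not> e"] by auto
qed

sublocale P: group P
  by (rule group_presented_group)

lemma presented_group_carrier: "carrier P = gcl ` {w. set w \<subseteq> Xl \<times> UNIV}"
  by (simp add: presented_group_eq word_monoid_carrier)

lemma presented_group_one: "\<one>\<^bsub>P\<^esub> = gcl []"
  by (simp add: presented_group_eq word_monoid_one)

lemma presented_group_mult:
  "set u \<subseteq> Xl \<times> UNIV \<Longrightarrow> set v \<subseteq> Xl \<times> UNIV \<Longrightarrow> gcl u \<otimes>\<^bsub>P\<^esub> gcl v = gcl (u @ v)"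
  by (simp add: presented_group_eq word_monoid_mult)

lemma generator_closed: "x \<in> Xl \<Longrightarrow> gcl [(x, e)] \<in> carrier P"
  by (force simp: presented_group_carrier)

lemma inv_generator: "x \<in> Xl \<Longrightarrow> inv\<^bsub>P\<^esub> (gcl [(x, False)]) = gcl [(x, True)]"
  using free_rel_cong[of x True]
  by (intro P.inv_equality)
    (simp_all add: generator_closed presented_group_mult presented_group_one word_class_eqI)

lemma relation_holds: "(u, v) \<in> Rel \<Longrightarrow> gcl u = gcl v"
  by (simp add: word_cong.base word_class_eqI)

lemma wpow_class:
  assumes "x \<in> Xl"
  shows "gcl (wpow x k) = gcl [(x, False)] [^]\<^bsub>P\<^esub> k"
proof -
  have letters: "set (wpow x k) \<subseteq> Xl \<times> UNIV"
    using assms by (auto simp: wpow_def)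
  have "gcl (wpow x k) = word_eval P (\<lambda>l. gcl [l]) (wpow x k)"
    using word_class_eq_word_eval[OF letters] by (simp add: presented_group_eq)
  also have "\<dots> = word_eval P (letter_val P (\<lambda>x. gcl [(x, False)])) (wpow x k)"
  proof (rule word_eval_cong)
    fix l assume "l \<in> set (wpow x k)"
    then consider "l = (x, False)" | "l = (x, True)" by (auto simp: wpow_def split: if_splits)
    then show "gcl [l] = letter_val P (\<lambda>x. gcl [(x, False)]) l"
      by cases (simp_all add: letter_val_def inv_generator assms)
  qed
  finally show ?thesis
    using assms by (simp add: P.word_eval_letter_val_wpow generator_closed)
qed

lemma generate_generators: "generate P ((\<lambda>x. gcl [(x, False)]) ` Xl) = carrier P"
proof
  show "generate P ((\<lambda>x. gcl [(x, False)]) ` Xl) \<subseteq> carrier P"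
    by (rule P.generate_incl) (use generator_closed in blast)
next
  show "carrier P \<subseteq> generate P ((\<lambda>x. gcl [(x, False)]) ` Xl)"
  proof
    fix g assume "g \<in> carrier P"
    then obtain w where w: "set w \<subseteq> Xl \<times> UNIV" "g = gcl w"
      by (auto simp: presented_group_carrier)
    have letter: "gcl [l] \<in> generate P ((\<lambda>x. gcl [(x, False)]) ` Xl)" if l: "l \<in> Xl \<times> UNIV" for l
    proof -
      obtain x e where "l = (x, e)" "x \<in> Xl" using l by auto
      then show ?thesis
        by (cases e) (auto simp: inv_generator[symmetric] intro: generate.incl generate.inv)
    qed
    have "gcl w \<in> generate P ((\<lambda>x. gcl [(x, False)]) ` Xl)"
      using w(1)
    proof (induction w)
      case Nil
      show ?case using generate.one[of P] by (simp add: presented_group_one)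
    next
      case (Cons l w)
      then have "gcl (l # w) = gcl [l] \<otimes>\<^bsub>P\<^esub> gcl w"
        using presented_group_mult[of "[l]" w] by simp
      then show ?case using Cons letter by (simp add: generate.eng)
    qed
    then show "g \<in> generate P ((\<lambda>x. gcl [(x, False)]) ` Xl)" using w(2) by simp
  qed
qed

context
  fixes M :: "('m, 'z) monoid_scheme" and f :: "'g \<Rightarrow> 'm"
  assumes M: "group M" and rels: "rels_over (Xl \<times> UNIV) Rel"
    and f_closed: "\<And>x. x \<in> Xl \<Longrightarrow> f x \<in> carrier M"
    and f_rels: "\<And>u v. (u, v) \<in> Rel \<Longrightarrow>
        word_eval M (letter_val M f) u = word_eval M (letter_val M f) v"
begin

lemma rels_over_presentation: "rels_over (Xl \<times> UNIV) (free_rels Xl \<union> Rel)"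
  using rels by (auto simp: rels_over_def free_rels_def)

lemma letter_val_closed: "l \<in> Xl \<times> UNIV \<Longrightarrow> letter_val M f l \<in> carrier M"
  using f_closed by (auto simp: letter_val_def group.inv_closed[OF M])

lemma letter_val_respects_rels:
  assumes "(u, v) \<in> free_rels Xl \<union> Rel"
  shows "word_eval M (letter_val M f) u = word_eval M (letter_val M f) v"
proof (cases "(u, v) \<in> Rel")
  case False
  interpret M: group M by (rule M)
  from False assms obtain x e where "x \<in> Xl" "u = [(x, e), (x, \<not> e)]" "v = []"
    by (auto simp: free_rels_def)
  then show ?thesis using f_closed by (cases e) (simp_all add: letter_val_def)
qed (rule f_rels)

lemma presented_group_lift_hom: "word_monoid_lift M (letter_val M f) \<in> hom P M"
  unfolding presented_group_eq
  by (rule word_monoid_lift_hom[OF group.is_monoid[OF M] rels_over_presentation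
        letter_val_closed letter_val_respects_rels])

lemma presented_group_lift_generator:
  assumes "x \<in> Xl"
  shows "word_monoid_lift M (letter_val M f) (gcl [(x, False)]) = f x"
proof -
  interpret M: group M by (rule M)
  have "word_monoid_lift M (letter_val M f) (gcl [(x, False)]) = word_eval M (letter_val M f) [(x, False)]"
    by (rule word_monoid_lift_class[OF M.is_monoid rels_over_presentation letter_val_closed
          letter_val_respects_rels]) (use assms in auto)
  then show ?thesis using f_closed assms by (simp add: letter_val_def)
qed

end

end

context group
begin

lemma mult_inv_cancel_left: "x \<in> carrier G \<Longrightarrow> z \<in> carrier G \<Longrightarrow> x \<otimes> (inv x \<otimes> z) = z"
  by (simp add: m_assoc[symmetric])

lemma inv_mult_cancel_left: "x \<in> carrier G \<Longrightarrow> z \<in> carrier G \<Longrightarrow> inv x \<otimes> (x \<otimes> z) = z"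
  by (simp add: m_assoc[symmetric])

lemma conj_hom: "h \<in> carrier G \<Longrightarrow> (\<lambda>x. inv h \<otimes> x \<otimes> h) \<in> hom G G"
  by (rule homI) (auto simp: m_assoc mult_inv_cancel_left)

lemma conj_int_pow:
  "h \<in> carrier G \<Longrightarrow> x \<in> carrier G \<Longrightarrow> inv h \<otimes> x [^] (k::int) \<otimes> h = (inv h \<otimes> x \<otimes> h) [^] k"
  using hom_int_pow[OF conj_hom, of h x k] is_group by simp

lemma conj_set_one: "K \<subseteq> carrier G \<Longrightarrow> conj_set G \<one> K = K"
  by (auto simp: conj_set_def image_iff subset_iff)

lemma conj_set_mult:
  assumes "K \<subseteq> carrier G" "h1 \<in> carrier G" "h2 \<in> carrier G"
  shows "conj_set G (h1 \<otimes> h2) K = conj_set G h2 (conj_set G h1 K)"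
  using assms by (force simp: conj_set_def image_image inv_mult_group m_assoc intro!: image_cong)

lemma subgroup_conj_set: "subgroup K G \<Longrightarrow> h \<in> carrier G \<Longrightarrow> subgroup (conj_set G h K) G"
  unfolding conj_set_def
  by (rule group_hom.subgroup_img_is_subgroup) (simp_all add: group_hom_def group_hom_axioms_def conj_hom)

lemma conj_set_generate_singleton:
  assumes "g \<in> carrier G" "h \<in> carrier G"
    and "inv h \<otimes> g \<otimes> h \<in> generate G {g}" "h \<otimes> g \<otimes> inv h \<in> generate G {g}"
  shows "conj_set G h (generate G {g}) = generate G {g}"
proof -
  have cyclic: "subgroup (generate G {g}) G" using generate_is_subgroup assms(1) by auto
  have "inv h \<otimes> g [^] k \<otimes> h \<in> generate G {g}" for k :: int
    using conj_int_pow subgroup_int_pow_closed[OF cyclic assms(3)] assms by simp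
  moreover have "h \<otimes> g [^] k \<otimes> inv h \<in> generate G {g}" for k :: int
    using conj_int_pow[of "inv h" g k] subgroup_int_pow_closed[OF cyclic assms(4)] assms by simp
  moreover have "g [^] k = inv h \<otimes> (h \<otimes> g [^] k \<otimes> inv h) \<otimes> h" for k :: int
    using assms by (simp add: m_assoc inv_mult_cancel_left)
  ultimately show ?thesis
    unfolding conj_set_def generate_pow[OF assms(1)] by blast
qed

end

section \<open>Active sums\<close>

locale active_sum_family = group G for G :: "('a, 'b) monoid_scheme" (structure) +
  fixes F :: "'a set set"
  assumes family_subgroup: "H \<in> F \<Longrightarrow> subgroup H G"
    and family_conj_closed: "H \<in> F \<Longrightarrow> h \<in> carrier G \<Longrightarrow> conj_set G h H \<in> F"
begin

abbreviation "S \<equiv> active_sum_group G F"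
abbreviation "L \<equiv> as_letters G F"
abbreviation "scl \<equiv> word_class L (as_rels G F)"
abbreviation \<iota> :: "'a set \<Rightarrow> 'a \<Rightarrow> ('a set \<times> 'a) list set" where "\<iota> H g \<equiv> scl [(H, g)]"

lemma active_sum_group_eq: "S = word_monoid L (as_rels G F)"
  by (simp add: active_sum_group_def)

lemma family_subset_carrier: "H \<in> F \<Longrightarrow> x \<in> H \<Longrightarrow> x \<in> carrier G"
  by (rule subgroup.mem_carrier[OF family_subgroup])

lemma as_letters_iff: "(H, g) \<in> L \<longleftrightarrow> H \<in> F \<and> g \<in> H"
  by (simp add: as_letters_def)

lemma as_rels_cases:
  assumes "(u, v) \<in> as_rels G F"
  obtains (mult) H g g' where "u = [(H, g), (H, g')]" "v = [(H, g \<otimes> g')]" "H \<in> F" "g \<in> H" "g' \<in> H"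
  | (one) H where "u = [(H, \<one>)]" "v = []" "H \<in> F"
  | (conj) H1 H2 h g where "u = [(H1, inv h), (H2, g), (H1, h), (conj_set G h H2, inv (inv h \<otimes> g \<otimes> h))]"
      "v = []" "H1 \<in> F" "H2 \<in> F" "h \<in> H1" "g \<in> H2"
  using assms unfolding as_rels_def by auto

lemma rels_over_as_rels: "rels_over L (as_rels G F)"
  unfolding rels_over_def
proof (clarify)
  fix u v assume "(u, v) \<in> as_rels G F"
  then show "set u \<subseteq> L \<and> set v \<subseteq> L"
  proof (cases rule: as_rels_cases)
    case (conj H1 H2 h g)
    then have "inv (inv h \<otimes> g \<otimes> h) = inv h \<otimes> inv g \<otimes> h"
      by (simp add: family_subset_carrier inv_mult_group m_assoc)
    then have "inv (inv h \<otimes> g \<otimes> h) \<in> conj_set G h H2"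
      using conj subgroup.m_inv_closed[OF family_subgroup] by (auto simp: conj_set_def)
    then show ?thesis
      using conj subgroup.m_inv_closed[OF family_subgroup]
      by (auto simp: as_letters_iff family_conj_closed family_subset_carrier)
  qed (auto simp: as_letters_iff subgroup.m_closed[OF family_subgroup] subgroup.one_closed[OF family_subgroup])
qed

lemma as_rels_mult: "H \<in> F \<Longrightarrow> g \<in> H \<Longrightarrow> g' \<in> H \<Longrightarrow> ([(H, g), (H, g')], [(H, g \<otimes> g')]) \<in> as_rels G F"
  unfolding as_rels_def by auto

lemma as_rels_one: "H \<in> F \<Longrightarrow> ([(H, \<one>)], []) \<in> as_rels G F"
  unfolding as_rels_def by auto

lemma \<iota>_mult: "H \<in> F \<Longrightarrow> g \<in> H \<Longrightarrow> g' \<in> H \<Longrightarrow> \<iota> H g \<otimes>\<^bsub>S\<^esub> \<iota> H g' = \<iota> H (g \<otimes> g')"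
  by (simp add: active_sum_group_eq word_monoid_mult as_letters_iff word_class_eqI
      word_cong.base as_rels_mult)

lemma \<iota>_one: "H \<in> F \<Longrightarrow> \<iota> H \<one> = \<one>\<^bsub>S\<^esub>"
  by (simp add: active_sum_group_eq word_monoid_one word_class_eqI word_cong.base as_rels_one)

lemma group_active_sum: "group S"
  unfolding active_sum_group_eq
proof (rule group_word_monoid)
  fix l assume "l \<in> L"
  then obtain H g where l: "l = (H, g)" "H \<in> F" "g \<in> H" by (cases l) (auto simp: as_letters_iff)
  then have inv_g: "inv g \<in> H" by (simp add: subgroup.m_inv_closed[OF family_subgroup])
  have "scl [(H, inv g), l] = scl []"
    using \<iota>_mult[OF l(2) inv_g l(3)] \<iota>_one[OF l(2)] l inv_g family_subset_carrier[OF l(2,3)]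
    by (simp add: active_sum_group_eq word_monoid_mult word_monoid_one as_letters_iff)
  then show "\<exists>y\<in>L. word_cong (as_rels G F) [y, l] []"
    using l inv_g by (auto simp: as_letters_iff word_class_eq_iff)
qed

sublocale S: group S
  by (rule group_active_sum)

lemma \<iota>_closed: "H \<in> F \<Longrightarrow> g \<in> H \<Longrightarrow> \<iota> H g \<in> carrier S"
  by (force simp: active_sum_group_eq word_monoid_carrier as_letters_iff)

lemma \<iota>_hom: "H \<in> F \<Longrightarrow> \<iota> H \<in> hom (G\<lparr>carrier := H\<rparr>) S"
  by (rule homI) (simp_all add: \<iota>_closed \<iota>_mult)

lemma \<iota>_group_hom: "H \<in> F \<Longrightarrow> group_hom (G\<lparr>carrier := H\<rparr>) S (\<iota> H)"
  using \<iota>_hom subgroup.subgroup_is_group[OF family_subgroup is_group]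
  by (simp add: group_hom_def group_hom_axioms_def S.is_group)

lemma \<iota>_inv: "H \<in> F \<Longrightarrow> g \<in> H \<Longrightarrow> \<iota> H (inv g) = inv\<^bsub>S\<^esub> (\<iota> H g)"
  using group_hom.hom_inv[OF \<iota>_group_hom] family_subgroup by simp

lemma \<iota>_int_pow:
  assumes "H \<in> F" "g \<in> H"
  shows "\<iota> H (g [^] (k::int)) = \<iota> H g [^]\<^bsub>S\<^esub> k"
proof -
  have "g [^] k = g [^]\<^bsub>G\<lparr>carrier := H\<rparr>\<^esub> k"
    by (rule int_pow_consistent[OF family_subgroup[OF assms(1)] assms(2)])
  then show ?thesis using group_hom.hom_int_pow[OF \<iota>_group_hom[OF assms(1)]] assms(2) by simp
qed

lemma \<iota>_conj:
  assumes "H1 \<in> F" "H2 \<in> F" "h \<in> H1" "g \<in> H2"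
  shows "\<iota> H1 (inv h) \<otimes>\<^bsub>S\<^esub> \<iota> H2 g \<otimes>\<^bsub>S\<^esub> \<iota> H1 h = \<iota> (conj_set G h H2) (inv h \<otimes> g \<otimes> h)"
proof -
  define K y where "K = conj_set G h H2" and "y = inv h \<otimes> g \<otimes> h"
  have letters: "set [(H1, inv h), (H2, g), (H1, h), (K, inv y)] \<subseteq> L"
    and rel: "([(H1, inv h), (H2, g), (H1, h), (K, inv y)], []) \<in> as_rels G F"
    using rels_over_as_rels assms unfolding K_def y_def rels_over_def as_rels_def by blast+
  then have "K \<in> F" "y \<in> K"
    using subgroup.m_inv_closed[OF family_subgroup, of K "inv y"] assms
    by (auto simp: as_letters_iff y_def family_subset_carrier)
  have X: "\<iota> H1 (inv h) \<otimes>\<^bsub>S\<^esub> \<iota> H2 g \<otimes>\<^bsub>S\<^esub> \<iota> H1 h \<in> carrier S"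
    using letters by (simp add: \<iota>_closed as_letters_iff)
  have "\<iota> H1 (inv h) \<otimes>\<^bsub>S\<^esub> \<iota> H2 g \<otimes>\<^bsub>S\<^esub> \<iota> H1 h \<otimes>\<^bsub>S\<^esub> \<iota> K (inv y)
      = scl [(H1, inv h), (H2, g), (H1, h), (K, inv y)]"
    using letters by (simp add: active_sum_group_eq word_monoid_mult)
  also have "\<dots> = \<one>\<^bsub>S\<^esub>"
    by (simp add: active_sum_group_eq word_monoid_one word_class_eqI word_cong.base rel)
  finally have "\<one>\<^bsub>S\<^esub> = \<iota> H1 (inv h) \<otimes>\<^bsub>S\<^esub> \<iota> H2 g \<otimes>\<^bsub>S\<^esub> \<iota> H1 h \<otimes>\<^bsub>S\<^esub> inv\<^bsub>S\<^esub> (\<iota> K y)"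
    using \<open>K \<in> F\<close> \<open>y \<in> K\<close> by (simp add: \<iota>_inv)
  then have "\<iota> H1 (inv h) \<otimes>\<^bsub>S\<^esub> \<iota> H2 g \<otimes>\<^bsub>S\<^esub> \<iota> H1 h = \<one>\<^bsub>S\<^esub> \<otimes>\<^bsub>S\<^esub> \<iota> K y"
    by (rule S.inv_solve_right[OF S.one_closed X \<iota>_closed[OF \<open>K \<in> F\<close> \<open>y \<in> K\<close>], THEN iffD1])
  then show ?thesis
    using \<iota>_closed[OF \<open>K \<in> F\<close> \<open>y \<in> K\<close>] by (simp add: K_def y_def)
qed

lemma active_sum_map_eq: "active_sum_map G F = word_monoid_lift G snd"
proof -
  have "eval_word G w = word_eval G snd w" for w :: "('a set \<times> 'a) list"
    by (induction w) (auto simp: eval_word_def word_eval_def)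
  then show ?thesis by (simp add: fun_eq_iff active_sum_map_def word_monoid_lift_def)
qed

lemma snd_letter_closed: "l \<in> L \<Longrightarrow> snd l \<in> carrier G"
  by (cases l) (auto simp: as_letters_iff family_subset_carrier)

lemma snd_respects_as_rels: "(u, v) \<in> as_rels G F \<Longrightarrow> word_eval G snd u = word_eval G snd v"
proof (erule as_rels_cases)
  fix H1 H2 h g assume "u = [(H1, inv h), (H2, g), (H1, h), (conj_set G h H2, inv (inv h \<otimes> g \<otimes> h))]"
    "v = []" "H1 \<in> F" "H2 \<in> F" "h \<in> H1" "g \<in> H2"
  then show ?thesis by (simp add: family_subset_carrier m_assoc[symmetric])
qed (auto simp: family_subset_carrier m_assoc)

lemma active_sum_map_class: "set w \<subseteq> L \<Longrightarrow> active_sum_map G F (scl w) = word_eval G snd w"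
  unfolding active_sum_map_eq
  by (rule word_monoid_lift_class[OF monoid_axioms rels_over_as_rels snd_letter_closed snd_respects_as_rels])

lemma active_sum_map_hom: "active_sum_map G F \<in> hom S G"
  unfolding active_sum_map_eq active_sum_group_eq
  by (rule word_monoid_lift_hom[OF monoid_axioms rels_over_as_rels snd_letter_closed snd_respects_as_rels])

lemma active_sum_map_\<iota>: "H \<in> F \<Longrightarrow> g \<in> H \<Longrightarrow> active_sum_map G F (\<iota> H g) = g"
  by (simp add: active_sum_map_class as_letters_iff family_subset_carrier)

definition restricts_to_\<iota> :: "('a \<Rightarrow> ('a set \<times> 'a) list set) \<Rightarrow> 'a set \<Rightarrow> bool" where
  "restricts_to_\<iota> \<psi> H \<longleftrightarrow> (\<forall>x\<in>H. \<psi> x = \<iota> H x)"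

lemma restricts_to_\<iota>_cyclic:
  assumes \<psi>: "\<psi> \<in> hom G S" and H: "generate G {g} \<in> F" and g: "g \<in> carrier G"
    and \<psi>_g: "\<psi> g = \<iota> (generate G {g}) g"
  shows "restricts_to_\<iota> \<psi> (generate G {g})"
  unfolding restricts_to_\<iota>_def
proof
  fix x assume "x \<in> generate G {g}"
  then obtain k :: int where x: "x = g [^] k" by (auto simp: generate_pow[OF g])
  have "\<psi> (g [^] k) = \<psi> g [^]\<^bsub>S\<^esub> k"
    using hom_int_pow[OF \<psi> g is_group S.is_group] .
  then show "\<psi> x = \<iota> (generate G {g}) x"
    using \<iota>_int_pow[OF H generate.incl] x \<psi>_g by simp
qed

lemma restricts_to_\<iota>_conj_by_member:
  assumes \<psi>: "\<psi> \<in> hom G S" and H: "H \<in> F" "h \<in> H" "restricts_to_\<iota> \<psi> H"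
    and K: "K \<in> F" "restricts_to_\<iota> \<psi> K"
  shows "restricts_to_\<iota> \<psi> (conj_set G h K)"
  unfolding restricts_to_\<iota>_def conj_set_def
proof
  fix y assume "y \<in> (\<lambda>x. inv h \<otimes> x \<otimes> h) ` K"
  then obtain x where x: "x \<in> K" "y = inv h \<otimes> x \<otimes> h" by blast
  have inv_h: "inv h \<in> H" using subgroup.m_inv_closed[OF family_subgroup] H by blast
  have "\<psi> y = \<psi> (inv h) \<otimes>\<^bsub>S\<^esub> \<psi> x \<otimes>\<^bsub>S\<^esub> \<psi> h"
    using x H K by (simp add: hom_mult[OF \<psi>] family_subset_carrier)
  also have "\<dots> = \<iota> H (inv h) \<otimes>\<^bsub>S\<^esub> \<iota> K x \<otimes>\<^bsub>S\<^esub> \<iota> H h"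
    using H K x inv_h by (simp add: restricts_to_\<iota>_def)
  also have "\<dots> = \<iota> (conj_set G h K) y"
    using \<iota>_conj[OF H(1) K(1) H(2) x(1)] x(2) by simp
  finally show "\<psi> y = \<iota> ((\<lambda>x. inv h \<otimes> x \<otimes> h) ` K) y" by (simp add: conj_set_def)
qed

lemma restricts_to_\<iota>_conj:
  assumes \<psi>: "\<psi> \<in> hom G S" and F0: "F0 \<subseteq> F" "\<And>H. H \<in> F0 \<Longrightarrow> restricts_to_\<iota> \<psi> H"
    and h: "h \<in> generate G (\<Union>F0)"
  shows "K \<in> F \<Longrightarrow> restricts_to_\<iota> \<psi> K \<Longrightarrow> restricts_to_\<iota> \<psi> (conj_set G h K)"
  using h
proof (induction arbitrary: K rule: generate.induct)
  case one
  then show ?case by (simp add: conj_set_one subset_iff family_subset_carrier)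
next
  case (incl h)
  then obtain H where "H \<in> F0" "h \<in> H" by blast
  then show ?case
    using incl F0 by (blast intro: restricts_to_\<iota>_conj_by_member[OF \<psi>])
next
  case (inv h)
  then obtain H where "H \<in> F0" "h \<in> H" by blast
  then have "H \<in> F" "inv h \<in> H" using F0(1) subgroup.m_inv_closed[OF family_subgroup] by auto
  then show ?case
    using inv \<open>H \<in> F0\<close> F0 by (blast intro: restricts_to_\<iota>_conj_by_member[OF \<psi>])
next
  case (eng h1 h2)
  have "\<Union>F0 \<subseteq> carrier G" using F0(1) family_subset_carrier by blast
  then have "h1 \<in> carrier G" "h2 \<in> carrier G"
    using eng.hyps generate_in_carrier by blast+
  then show ?case
    using eng family_conj_closed
    by (simp add: conj_set_mult subset_iff family_subset_carrier)
qed

lemma active_sum_map_left_inverse: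
  assumes \<psi>: "\<psi> \<in> hom G S" and restr: "\<And>H. H \<in> F \<Longrightarrow> restricts_to_\<iota> \<psi> H"
    and x: "x \<in> generate G (\<Union>F)"
  shows "active_sum_map G F (\<psi> x) = x"
proof -
  interpret \<psi>: group_hom G S \<psi>
    using \<psi> by (simp add: group_hom_def group_hom_axioms_def S.is_group is_group)
  interpret \<phi>: group_hom S G "active_sum_map G F"
    using active_sum_map_hom by (simp add: group_hom_def group_hom_axioms_def S.is_group is_group)
  have \<psi>_\<iota>: "\<psi> y = \<iota> H y" if "y \<in> H" "H \<in> F" for y H
    using restr that by (simp add: restricts_to_\<iota>_def)
  have closed: "\<Union>F \<subseteq> carrier G" using family_subset_carrier by blast
  from x show ?thesis
  proof (induction rule: generate.induct)
    case (eng h1 h2)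
    then show ?case
      using generate_in_carrier[OF closed] by simp
  qed (auto simp: \<psi>_\<iota> active_sum_map_\<iota> subgroup.m_inv_closed[OF family_subgroup]
        family_subset_carrier \<iota>_closed)
qed

lemma active_sum_map_right_inverse:
  assumes \<psi>: "\<psi> \<in> hom G S" and restr: "\<And>H. H \<in> F \<Longrightarrow> restricts_to_\<iota> \<psi> H"
    and y: "y \<in> carrier S"
  shows "\<psi> (active_sum_map G F y) = y"
proof -
  obtain w where w: "set w \<subseteq> L" "y = scl w"
    using y by (auto simp: active_sum_group_eq word_monoid_carrier)
  have "\<psi> (active_sum_map G F y) = \<psi> (word_eval G snd w)"
    using w by (simp add: active_sum_map_class)
  also have "\<dots> = word_eval S (\<lambda>l. \<psi> (snd l)) w"
    using w(1) snd_letter_closed by (intro hom_word_eval[OF \<psi> is_group S.is_group]) blast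
  also have "\<dots> = word_eval S (\<lambda>l. scl [l]) w"
  proof (rule word_eval_cong)
    fix l assume "l \<in> set w"
    then have "l \<in> L" using w(1) by blast
    then obtain H g where "l = (H, g)" "H \<in> F" "g \<in> H" by (auto simp: as_letters_def)
    then show "\<psi> (snd l) = scl [l]" using restr by (simp add: restricts_to_\<iota>_def)
  qed
  also have "\<dots> = y"
    using w by (simp add: word_class_eq_word_eval active_sum_group_eq)
  finally show ?thesis .
qed

theorem is_active_sum_if_restricts_to_\<iota>:
  assumes F0: "F0 \<subseteq> F" and conjugates: "\<And>H. H \<in> F \<Longrightarrow> \<exists>H0\<in>F0. \<exists>h\<in>carrier G. H = conj_set G h H0"
    and generates: "generate G (\<Union>F0) = carrier G"
    and \<psi>: "\<psi> \<in> hom G S" and restr: "\<And>H. H \<in> F0 \<Longrightarrow> restricts_to_\<iota> \<psi> H"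
  shows "is_active_sum G F"
proof -
  have restr_F: "restricts_to_\<iota> \<psi> H" if "H \<in> F" for H
    using conjugates[OF that] restricts_to_\<iota>_conj[OF \<psi> F0 restr] F0 restr generates by blast
  have generates_F: "generate G (\<Union>F) = carrier G"
    using mono_generate[of "\<Union>F0" "\<Union>F"] generate_incl[of "\<Union>F"] F0 generates
      family_subset_carrier by blast
  have "group_isomorphisms S G (active_sum_map G F) \<psi>"
    unfolding group_isomorphisms_def
    using active_sum_map_hom \<psi> active_sum_map_right_inverse[OF \<psi> restr_F]
      active_sum_map_left_inverse[OF \<psi> restr_F] generates_F by auto
  then show ?thesis
    unfolding is_active_sum_def
    using family_subgroup generates_F family_conj_closed group_isomorphisms_imp_iso by blast
qed

end

section \<open>The metacyclic group\<close>

locale metacyclic_relations = group G for G (structure) +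
  fixes m s :: nat and t r :: int and a b
  assumes a_closed [simp]: "a \<in> carrier G" and b_closed [simp]: "b \<in> carrier G"
    and a_pow_m: "a [^] int m = \<one>"
    and b_pow_s: "b [^] int s = a [^] t"
    and b_conj_a: "inv b \<otimes> a \<otimes> b = a [^] r"
    and s_pos: "0 < s"
    and gcd_dvd_t: "gcd (int m) (r - 1) dvd t"
begin

abbreviation "A \<equiv> generate G {a}"
abbreviation "B \<equiv> generate G {b}"
abbreviation "F \<equiv> {conj_set G g A | g. g \<in> carrier G} \<union> {conj_set G g B | g. g \<in> carrier G}"

lemma pow_in_A: "a [^] (k::int) \<in> A" and pow_in_B: "b [^] (k::int) \<in> B"
  by (auto simp: generate_pow)

lemma b_pow_conj_a: "inv (b [^] (n::nat)) \<otimes> a \<otimes> b [^] n = a [^] (r ^ n)"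
proof (induction n)
  case (Suc n)
  have "inv (b [^] Suc n) \<otimes> a \<otimes> b [^] Suc n = inv b \<otimes> (inv (b [^] n) \<otimes> a \<otimes> b [^] n) \<otimes> b"
    by (simp add: inv_mult_group m_assoc)
  also have "\<dots> = a [^] (r ^ Suc n)"
    using Suc by (simp add: conj_int_pow b_conj_a int_pow_pow mult.commute)
  finally show ?case .
qed simp

lemma b_normalizes_A: "conj_set G b A = A"
proof (rule conj_set_generate_singleton)
  show "inv b \<otimes> a \<otimes> b \<in> A" by (simp add: b_conj_a pow_in_A)
  obtain n where s_Suc: "s = Suc n" using s_pos not0_implies_Suc by blast
  define z where "z = b [^] n \<otimes> b"
  have "b [^] int s = z"
    unfolding s_Suc int_pow_int by (simp add: z_def)
  then have "z = a [^] t" using b_pow_s by simp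
  then have za: "z \<otimes> a = a \<otimes> z"
    using int_pow_mult[of a t 1] int_pow_mult[of a 1 t] by (simp add: add.commute)
  have "b \<otimes> a \<otimes> inv b = inv (b [^] n) \<otimes> (z \<otimes> a) \<otimes> inv b"
    by (simp add: z_def m_assoc inv_mult_cancel_left)
  also have "\<dots> = inv (b [^] n) \<otimes> (a \<otimes> z) \<otimes> inv b"
    by (simp only: za)
  also have "\<dots> = inv (b [^] n) \<otimes> a \<otimes> b [^] n"
    by (simp add: z_def m_assoc)
  also have "\<dots> = a [^] (r ^ n)" by (rule b_pow_conj_a)
  finally show "b \<otimes> a \<otimes> inv b \<in> A" by (simp add: pow_in_A)
qed simp_all

text \<open>The only use of (m, r - 1) | t: writing t = \<alpha>m + \<beta>(r - 1), the element c = a^\<beta> has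
  commutator a^t = b^s with b.\<close>
lemma obtain_a_pow_commutator:
  obtains c where "c \<in> A" "inv c \<otimes> (inv b \<otimes> c \<otimes> b) = b [^] int s"
    "inv b \<otimes> c \<otimes> b \<otimes> inv c = b [^] int s"
proof -
  obtain k where k: "t = gcd (int m) (r - 1) * k" using gcd_dvd_t by (auto elim: dvdE)
  obtain u v where uv: "u * int m + v * (r - 1) = gcd (int m) (r - 1)" using bezout_int by blast
  define \<beta> where "\<beta> = k * v"
  have t: "t = int m * (k * u) + \<beta> * (r - 1)"
    using k uv[symmetric] by (simp add: \<beta>_def algebra_simps)
  have a_t: "a [^] t = a [^] (\<beta> * (r - 1))"
    unfolding t by (simp add: int_pow_mult int_pow_pow[symmetric] a_pow_m)
  have conj_c: "inv b \<otimes> a [^] \<beta> \<otimes> b = a [^] (r * \<beta>)"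
    by (simp add: conj_int_pow b_conj_a int_pow_pow)
  have "inv (a [^] \<beta>) \<otimes> (inv b \<otimes> a [^] \<beta> \<otimes> b) = a [^] (- \<beta> + r * \<beta>)"
    and "inv b \<otimes> a [^] \<beta> \<otimes> b \<otimes> inv (a [^] \<beta>) = a [^] (r * \<beta> + - \<beta>)"
    using int_pow_mult[of a "- \<beta>" "r * \<beta>"] int_pow_mult[of a "r * \<beta>" "- \<beta>"]
    by (simp_all add: conj_c int_pow_neg)
  moreover have "- \<beta> + r * \<beta> = \<beta> * (r - 1)" "r * \<beta> + - \<beta> = \<beta> * (r - 1)"
    by (simp_all add: algebra_simps)
  ultimately show thesis
    using that[of "a [^] \<beta>"] pow_in_A a_t b_pow_s by simp
qed

lemma commutator_normalizes_B:
  assumes c: "c \<in> carrier G" and "inv c \<otimes> (inv b \<otimes> c \<otimes> b) = b [^] int s"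
    and "inv b \<otimes> c \<otimes> b \<otimes> inv c = b [^] int s"
  shows "conj_set G c B = B"
proof (rule conj_set_generate_singleton)
  have B: "subgroup B G" by (simp add: generate_is_subgroup)
  have "inv c \<otimes> b \<otimes> c = b \<otimes> inv (inv c \<otimes> (inv b \<otimes> c \<otimes> b))"
    using c by (simp add: inv_mult_group m_assoc mult_inv_cancel_left)
  then show "inv c \<otimes> b \<otimes> c \<in> B"
    using assms pow_in_B[of 1] pow_in_B[of "- int s"]
    by (simp add: subgroup.m_closed[OF B] int_pow_neg)
  have "c \<otimes> b \<otimes> inv c = b \<otimes> (inv b \<otimes> c \<otimes> b \<otimes> inv c)"
    using c by (simp add: m_assoc mult_inv_cancel_left)
  then show "c \<otimes> b \<otimes> inv c \<in> B"
    using assms pow_in_B[of 1] pow_in_B[of "int s"] by (simp add: subgroup.m_closed[OF B])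
qed (simp_all add: c)

lemma A_subgroup: "subgroup A G" and B_subgroup: "subgroup B G"
  by (simp_all add: generate_is_subgroup)

lemma conj_family_subgroup: "H \<in> F \<Longrightarrow> subgroup H G"
  using A_subgroup B_subgroup by (auto intro: subgroup_conj_set)

lemma conj_family_conj_closed:
  assumes "H \<in> F" "h \<in> carrier G"
  shows "conj_set G h H \<in> F"
proof -
  obtain g K where g: "g \<in> carrier G" and K: "K = A \<or> K = B" and H: "H = conj_set G g K"
    using assms(1) by blast
  have "K \<subseteq> carrier G" using K A_subgroup B_subgroup subgroup.subset by blast
  then have "conj_set G h H = conj_set G (g \<otimes> h) K"
    using g assms(2) H by (simp add: conj_set_mult)
  then show ?thesis using K g assms(2) by blast
qed

sublocale active_sum_family G F
  by (intro active_sum_family.intro active_sum_family_axioms.intro is_group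
      conj_family_subgroup conj_family_conj_closed)

lemma A_in_F: "A \<in> F" and B_in_F: "B \<in> F"
  using conj_set_one[OF subgroup.subset[OF A_subgroup]] conj_set_one[OF subgroup.subset[OF B_subgroup]]
  by force+

lemma \<iota>_b_pow_s: "\<iota> B (b [^] int s) = \<iota> A (a [^] t)"
proof -
  obtain c where c: "c \<in> A" and comm: "inv c \<otimes> (inv b \<otimes> c \<otimes> b) = b [^] int s"
    "inv b \<otimes> c \<otimes> b \<otimes> inv c = b [^] int s"
    by (rule obtain_a_pow_commutator)
  have c_closed: "c \<in> carrier G" using c subgroup.subset[OF A_subgroup] by blast
  have inv_c: "inv c \<in> A" and inv_b: "inv b \<in> B" and b: "b \<in> B"
    using c A_subgroup B_subgroup by (auto intro: subgroup.m_inv_closed generate.incl)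
  have d: "inv b \<otimes> c \<otimes> b \<in> A"
    using b_normalizes_A c by (auto simp: conj_set_def)
  have "\<iota> A (a [^] t) = \<iota> A (inv c) \<otimes>\<^bsub>S\<^esub> \<iota> A (inv b \<otimes> c \<otimes> b)"
    using comm b_pow_s \<iota>_mult[OF A_in_F inv_c d] by simp
  also have "\<dots> = \<iota> A (inv c) \<otimes>\<^bsub>S\<^esub> (\<iota> B (inv b) \<otimes>\<^bsub>S\<^esub> \<iota> A c \<otimes>\<^bsub>S\<^esub> \<iota> B b)"
    using \<iota>_conj[OF B_in_F A_in_F b c] b_normalizes_A by simp
  also have "\<dots> = (\<iota> A (inv c) \<otimes>\<^bsub>S\<^esub> \<iota> B (inv b) \<otimes>\<^bsub>S\<^esub> \<iota> A c) \<otimes>\<^bsub>S\<^esub> \<iota> B b"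
    using \<iota>_closed[OF A_in_F inv_c] \<iota>_closed[OF B_in_F inv_b] \<iota>_closed[OF A_in_F c]
      \<iota>_closed[OF B_in_F b]
    by (simp add: S.m_assoc)
  also have "\<dots> = \<iota> B (inv c \<otimes> inv b \<otimes> c) \<otimes>\<^bsub>S\<^esub> \<iota> B b"
    using \<iota>_conj[OF A_in_F B_in_F c inv_b] commutator_normalizes_B[OF c_closed comm] by simp
  also have "\<dots> = \<iota> B (inv c \<otimes> inv b \<otimes> c \<otimes> b)"
  proof -
    have "inv c \<otimes> inv b \<otimes> c \<in> conj_set G c B" using inv_b by (auto simp: conj_set_def)
    then show ?thesis
      using \<iota>_mult[OF B_in_F _ b] commutator_normalizes_B[OF c_closed comm] by simp
  qed
  also have "\<dots> = \<iota> B (b [^] int s)"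
    using comm(1) c_closed by (simp add: m_assoc)
  finally show ?thesis ..
qed

lemma \<iota>_b_conj_a: "inv\<^bsub>S\<^esub> (\<iota> B b) \<otimes>\<^bsub>S\<^esub> \<iota> A a \<otimes>\<^bsub>S\<^esub> \<iota> B b = \<iota> A (a [^] r)"
  using \<iota>_conj[OF B_in_F A_in_F generate.incl generate.incl, of b a] \<iota>_inv[OF B_in_F generate.incl, of b]
    b_normalizes_A b_conj_a by simp

end

lemma UNIV_gen: "(UNIV :: gen set) = {GA, GB}"
  using gen.exhaust by auto

locale metacyclic_presentation =
  fixes m s :: nat and t r :: int
  assumes "0 < s" and "gcd (int m) (r - 1) dvd t"
begin

sublocale group_presentation UNIV "metacyclic_rels m s t r" .

text \<open>The letters form the set UNIV \<times> UNIV; simplifying it to UNIV would prevent the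
  lemmas of the presentation from matching.\<close>
declare UNIV_Times_UNIV [simp del]

lemma mc_a_eq: "mc_a m s t r = gcl [(GA, False)]" and mc_b_eq: "mc_b m s t r = gcl [(GB, False)]"
  by (simp_all add: mc_a_def mc_b_def)

lemma metacyclic_rels_mem:
  "(wpow GA (int m), []) \<in> metacyclic_rels m s t r"
  "(wpow GB (int s), wpow GA t) \<in> metacyclic_rels m s t r"
  "([(GB, True), (GA, False), (GB, False)], wpow GA r) \<in> metacyclic_rels m s t r"
  by (simp_all add: metacyclic_rels_def)

lemma metacyclic_rels_hold:
  "mc_a m s t r [^]\<^bsub>P\<^esub> int m = \<one>\<^bsub>P\<^esub>"
  "mc_b m s t r [^]\<^bsub>P\<^esub> int s = mc_a m s t r [^]\<^bsub>P\<^esub> t"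
  "inv\<^bsub>P\<^esub> (mc_b m s t r) \<otimes>\<^bsub>P\<^esub> mc_a m s t r \<otimes>\<^bsub>P\<^esub> mc_b m s t r = mc_a m s t r [^]\<^bsub>P\<^esub> r"
proof -
  have "gcl [(GB, True), (GA, False), (GB, False)]
      = inv\<^bsub>P\<^esub> (gcl [(GB, False)]) \<otimes>\<^bsub>P\<^esub> gcl [(GA, False)] \<otimes>\<^bsub>P\<^esub> gcl [(GB, False)]"
    by (simp add: inv_generator presented_group_mult)
  then show "inv\<^bsub>P\<^esub> (mc_b m s t r) \<otimes>\<^bsub>P\<^esub> mc_a m s t r \<otimes>\<^bsub>P\<^esub> mc_b m s t r = mc_a m s t r [^]\<^bsub>P\<^esub> r"
    using relation_holds[OF metacyclic_rels_mem(3)] by (simp add: mc_a_eq mc_b_eq wpow_class)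
qed (simp_all add: mc_a_eq mc_b_eq wpow_class[symmetric] presented_group_one
    relation_holds[OF metacyclic_rels_mem(1)] relation_holds[OF metacyclic_rels_mem(2)])

lemma mc_a_closed: "mc_a m s t r \<in> carrier P" and mc_b_closed: "mc_b m s t r \<in> carrier P"
  by (simp_all add: mc_a_eq mc_b_eq generator_closed)

sublocale metacyclic_relations P m s t r "mc_a m s t r" "mc_b m s t r"
  using metacyclic_presentation_axioms
  by unfold_locales
    (simp_all add: metacyclic_presentation_def metacyclic_rels_hold mc_a_closed mc_b_closed)

definition generator_image :: "gen \<Rightarrow> ((gen \<times> bool) list set set \<times> (gen \<times> bool) list set) list set" where
  "generator_image x = (case x of GA \<Rightarrow> \<iota> A (mc_a m s t r) | GB \<Rightarrow> \<iota> B (mc_b m s t r))"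

abbreviation "\<psi> \<equiv> word_monoid_lift S (letter_val S generator_image)"

lemma generator_image_closed: "generator_image x \<in> carrier S"
  by (cases x) (simp_all add: generator_image_def \<iota>_closed[OF A_in_F] \<iota>_closed[OF B_in_F] generate.incl)

lemma rels_over_metacyclic_rels: "rels_over (UNIV \<times> UNIV) (metacyclic_rels m s t r)"
  by (simp add: rels_over_def UNIV_Times_UNIV)

lemma generator_image_respects_rels:
  assumes "(u, v) \<in> metacyclic_rels m s t r"
  shows "word_eval S (letter_val S generator_image) u = word_eval S (letter_val S generator_image) v"
proof -
  let ?a = "mc_a m s t r" and ?b = "mc_b m s t r" and ?ev = "word_eval S (letter_val S generator_image)"
  have a: "generator_image GA = \<iota> A ?a" and b: "generator_image GB = \<iota> B ?b"
    by (simp_all add: generator_image_def)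
  have a_closed: "\<iota> A ?a \<in> carrier S" and b_closed: "\<iota> B ?b \<in> carrier S"
    using generator_image_closed[of GA] generator_image_closed[of GB] by (simp_all only: a b)
  have ev_a: "?ev (wpow GA k) = \<iota> A (?a [^]\<^bsub>P\<^esub> k)" and ev_b: "?ev (wpow GB k) = \<iota> B (?b [^]\<^bsub>P\<^esub> k)" for k
    using S.word_eval_letter_val_wpow[of generator_image GA k, OF generator_image_closed]
      S.word_eval_letter_val_wpow[of generator_image GB k, OF generator_image_closed]
    by (simp_all add: a b \<iota>_int_pow[OF A_in_F generate.incl] \<iota>_int_pow[OF B_in_F generate.incl])
  have ev_conj: "?ev [(GB, True), (GA, False), (GB, False)]
      = inv\<^bsub>S\<^esub> (\<iota> B ?b) \<otimes>\<^bsub>S\<^esub> \<iota> A ?a \<otimes>\<^bsub>S\<^esub> \<iota> B ?b"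
    using a_closed b_closed by (simp add: letter_val_def a b S.m_assoc)
  consider "u = wpow GA (int m)" "v = []" | "u = wpow GB (int s)" "v = wpow GA t"
    | "u = [(GB, True), (GA, False), (GB, False)]" "v = wpow GA r"
    using assms by (auto simp: metacyclic_rels_def)
  then show ?thesis
  proof cases
    case 1
    then show ?thesis by (simp add: ev_a a_pow_m \<iota>_one[OF A_in_F])
  next
    case 2
    then show ?thesis by (simp add: ev_a ev_b \<iota>_b_pow_s)
  next
    case 3
    then show ?thesis
      by (simp only: ev_a ev_conj \<iota>_b_conj_a)
  qed
qed

lemma \<psi>_hom: "\<psi> \<in> hom P S"
  by (rule presented_group_lift_hom[OF S.is_group rels_over_metacyclic_rels generator_image_closed
        generator_image_respects_rels])

lemma \<psi>_generator: "\<psi> (gcl [(x, False)]) = generator_image x"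
  by (rule presented_group_lift_generator[OF S.is_group rels_over_metacyclic_rels generator_image_closed
        generator_image_respects_rels]) simp_all

lemma \<psi>_restricts_to_\<iota>: "restricts_to_\<iota> \<psi> A" "restricts_to_\<iota> \<psi> B"
proof -
  have a: "\<psi> (mc_a m s t r) = \<iota> A (mc_a m s t r)" and b: "\<psi> (mc_b m s t r) = \<iota> B (mc_b m s t r)"
    using \<psi>_generator[of GA] \<psi>_generator[of GB] by (simp_all add: mc_a_eq mc_b_eq generator_image_def)
  show "restricts_to_\<iota> \<psi> A" by (rule restricts_to_\<iota>_cyclic[OF \<psi>_hom A_in_F mc_a_closed a])
  show "restricts_to_\<iota> \<psi> B" by (rule restricts_to_\<iota>_cyclic[OF \<psi>_hom B_in_F mc_b_closed b])
qed

lemma generate_A_B: "generate P (A \<union> B) = carrier P"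
proof -
  have "carrier P = generate P {mc_a m s t r, mc_b m s t r}"
    using generate_generators by (simp add: UNIV_gen mc_a_eq mc_b_eq)
  also have "\<dots> \<subseteq> generate P (A \<union> B)"
    by (rule P.mono_generate) (auto intro: generate.incl)
  finally show ?thesis
    using P.generate_incl[of "A \<union> B"] A_subgroup B_subgroup subgroup.subset by blast
qed

theorem is_active_sum_metacyclic: "is_active_sum P F"
proof (rule is_active_sum_if_restricts_to_\<iota>)
  show "{A, B} \<subseteq> F" by (intro insert_subsetI empty_subsetI A_in_F B_in_F)
  show "\<exists>H0\<in>{A, B}. \<exists>h\<in>carrier P. H = conj_set P h H0" if "H \<in> F" for H
  proof -
    from that obtain h H0 where "h \<in> carrier P" "H0 \<in> {A, B}" "H = conj_set P h H0" by auto
    then show ?thesis by blast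
  qed
  show "generate P (\<Union>{A, B}) = carrier P" using generate_A_B by simp
  show "\<psi> \<in> hom P S" by (rule \<psi>_hom)
  show "restricts_to_\<iota> \<psi> H" if "H \<in> {A, B}" for H
    using that \<psi>_restricts_to_\<iota> by blast
qed

end

theorem theorem3p5:
  fixes m s :: nat and t r :: int
  assumes "0 < m" and "0 < s"
    and "r ^ s mod int m = 1 mod int m"
    and "int m dvd t * (r - 1)"
    and "gcd (int m) (r - 1) dvd t"
  shows "is_active_sum (metacyclic m s t r)
           ({conj_set (metacyclic m s t r) g (generate (metacyclic m s t r) {mc_a m s t r})
               | g. g \<in> carrier (metacyclic m s t r)}
            \<union> {conj_set (metacyclic m s t r) g (generate (metacyclic m s t r) {mc_b m s t r})
               | g. g \<in> carrier (metacyclic m s t r)})"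
proof -
  interpret metacyclic_presentation m s t r
    using assms(2,5) by unfold_locales
  show ?thesis
    using is_active_sum_metacyclic by (simp add: metacyclic_def)
qed

end
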